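(* Let $\bar n\ge 1$ be an integer and let $\theta_2>0$ satisfy $\theta_2\neq k\pi/\sqrt{n}$ for all $n\in\{1,\dots,4\bar n+3\}$ and all $k\in\mathbb{N}$. Let $\Phi$ be the Kraus map $\Phi(\rho)=M_g\rho M_g^\dagger+M_e\rho M_e^\dagger+M_m\rho M_m^\dagger$ with $M_g,M_e,M_m$ as defined in the context. Then the finite-dimensional subspace $\mathcal{H}_0^{4\bar n+3}$ is invariant under $M_g,M_e,M_m$, and for every density operator $\rho_0$ (positive semidefinite, unit trace) with support in $\mathcal{H}_0^{4\bar n+3}$, the sequence $\rho_{k+1}=\Phi(\rho_k)$ converges to $|\bar n\rangle\langle\bar n|$. Moreover, $V(\rho)=\mathrm{trace}(f(\mathbf{N})\rho)$, with $f$ defined in the context, is a strict Lyapunov function on density operators supported in $\mathcal{H}_0^{4\bar n+3}$: $V(\Phi(\rho))<V(\rho)$ for every such $\rho\neq|\bar n\rangle\langle\bar n|$.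
   Context: Let $\mathcal{H}$ be the Hilbert space with orthonormal (Fock) basis $\{|n\rangle\}_{n\in\mathbb{N}}$ ($\mathbb{N}$ includes $0$). Let $\mathbf{a}=\sum_{n\ge1}\sqrt{n}\,|n-1\rangle\langle n|$ (annihilation operator), $\mathbf{a}^\dagger$ its adjoint, $\mathbf{N}=\mathbf{a}^\dagger\mathbf{a}=\sum_n n|n\rangle\langle n|$, $\mathbf{I}$ the identity, and for a function $h:\mathbb{N}\to\mathbb{C}$ write $h(\mathbf{N})=\sum_n h(n)|n\rangle\langle n|$. Let $\mathcal{H}_{n_1}^{n_2}=\mathrm{span}\{|n_1\rangle,\dots,|n_2\rangle\}$. Fix $\theta_1=\pi/\sqrt{\bar n+1}$, a parameter $\theta_2>0$ and an arbitrary real phase $\varphi$. Define $M_g=\mathbf{a}^\dagger\,\big(1+\cos\tfrac{\theta_2\sqrt{\mathbf{N}}}{2}\big)\,\frac{\sin(\theta_1\sqrt{\mathbf{N}+\mathbf{I}})}{2\sqrt{\mathbf{N}+\mathbf{I}}}$, $M_e=\cos^2\tfrac{\theta_1\sqrt{\mathbf{N}+\mathbf{I}}}{2}\,\cos\tfrac{\theta_2\sqrt{\mathbf{N}}}{2}-\sin^2\tfrac{\theta_1\sqrt{\mathbf{N}+\mathbf{I}}}{2}$, $M_m=e^{i\varphi}\,\mathbf{a}\,\frac{\sin(\theta_2\sqrt{\mathbf{N}}/2)}{\sqrt{\mathbf{N}}}\,\cos\tfrac{\theta_1\sqrt{\mathbf{N}+\mathbf{I}}}{2}$ (the value of $\sin(\theta_2\sqrt{n}/2)/\sqrt{n}$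 at $n=0$ is irrelevant since it is followed by $\mathbf{a}$). Set $\alpha_n=\pi\sqrt{(n+1)/(\bar n+1)}$ and $\beta_n=\theta_2\sqrt{n}/2$. Fix $\eta\in(0,1)$ and define $f:\mathbb{N}\to\mathbb{R}$ by $f(\bar n)=0$, $f(\bar n+1)=f(\bar n-1)=1$, $f(n-1)=f(n)+\eta\sin^2\tfrac{\alpha_n}{2}\cos^2\tfrac{\beta_n}{2}\,(f(n)-f(n+1))$ for $0<n<\bar n$ (recursively downward), $f(n+1)=f(n)+\eta\sin^2\tfrac{\beta_n}{2}\,(f(n)-f(n-1))$ for $\bar n<n<4\bar n+3$, and $f(n)=f(4\bar n+3)$ for $n>4\bar n+3$. *)

theory Defs
  imports "HOL-Analysis.Analysis"
begin

text \<open>Operators on the Fock space are represented by their (infinite) matrices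
  in the Fock basis: A i j = <i|A|j>.\<close>
type_synonym fmat = "nat \<Rightarrow> nat \<Rightarrow> complex"

definition mmul :: "fmat \<Rightarrow> fmat \<Rightarrow> fmat" where
  "mmul A B = (\<lambda>i j. infsum (\<lambda>k. A i k * B k j) UNIV)"

definition madd :: "fmat \<Rightarrow> fmat \<Rightarrow> fmat" where
  "madd A B = (\<lambda>i j. A i j + B i j)"

definition smul :: "complex \<Rightarrow> fmat \<Rightarrow> fmat" where
  "smul c A = (\<lambda>i j. c * A i j)"

definition adj :: "fmat \<Rightarrow> fmat" where
  "adj A = (\<lambda>i j. cnj (A j i))"

definition mtrace :: "fmat \<Rightarrow> complex" where
  "mtrace A = infsum (\<lambda>n. A n n) UNIV"

definition fN :: "(nat \<Rightarrow> complex) \<Rightarrow> fmat" where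
  "fN h = (\<lambda>i j. if i = j then h i else 0)"

definition ann :: fmat where
  "ann = (\<lambda>i j. if j = Suc i then complex_of_real (sqrt (real j)) else 0)"

definition cre :: fmat where
  "cre = adj ann"

definition ketbra :: "nat \<Rightarrow> fmat" where
  "ketbra n = (\<lambda>i j. if i = n \<and> j = n then 1 else 0)"

definition theta1 :: "nat \<Rightarrow> real" where
  "theta1 nbar = pi / sqrt (real nbar + 1)"

definition Mg :: "nat \<Rightarrow> real \<Rightarrow> fmat" where
  "Mg nbar th2 = mmul cre (fN (\<lambda>n. complex_of_real
      ((1 + cos (th2 * sqrt (real n) / 2)) *
       (sin (theta1 nbar * sqrt (real n + 1)) / (2 * sqrt (real n + 1))))))"

definition Me :: "nat \<Rightarrow> real \<Rightarrow> fmat" where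
  "Me nbar th2 = fN (\<lambda>n. complex_of_real
      ((cos (theta1 nbar * sqrt (real n + 1) / 2))\<^sup>2 * cos (th2 * sqrt (real n) / 2)
       - (sin (theta1 nbar * sqrt (real n + 1) / 2))\<^sup>2))"

definition Mm :: "nat \<Rightarrow> real \<Rightarrow> real \<Rightarrow> fmat" where
  "Mm nbar th2 \<phi> = smul (exp (\<i> * complex_of_real \<phi>))
      (mmul ann (fN (\<lambda>n. complex_of_real
         ((sin (th2 * sqrt (real n) / 2) / sqrt (real n)) *
          cos (theta1 nbar * sqrt (real n + 1) / 2)))))"

definition Kraus :: "nat \<Rightarrow> real \<Rightarrow> real \<Rightarrow> fmat \<Rightarrow> fmat" where
  "Kraus nbar th2 \<phi> \<rho> =
     madd (mmul (mmul (Mg nbar th2) \<rho>) (adj (Mg nbar th2)))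
      (madd (mmul (mmul (Me nbar th2) \<rho>) (adj (Me nbar th2)))
            (mmul (mmul (Mm nbar th2 \<phi>) \<rho>) (adj (Mm nbar th2 \<phi>))))"

definition density_on :: "nat \<Rightarrow> fmat \<Rightarrow> bool" where
  "density_on D \<rho> \<longleftrightarrow>
     (\<forall>i j. (D < i \<or> D < j) \<longrightarrow> \<rho> i j = 0) \<and>
     (\<forall>i j. \<rho> j i = cnj (\<rho> i j)) \<and>
     (\<forall>v :: nat \<Rightarrow> complex. 0 \<le> Re (\<Sum>i\<le>D. \<Sum>j\<le>D. cnj (v i) * \<rho> i j * v j)) \<and>
     mtrace \<rho> = 1"

definition invariant_on :: "nat \<Rightarrow> fmat \<Rightarrow> bool" where
  "invariant_on D M \<longleftrightarrow> (\<forall>i j. j \<le> D \<and> D < i \<longrightarrow> M i j = 0)"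

text \<open>V(rho) = trace (f(N) rho) (real for Hermitian rho).\<close>
definition Lyap :: "(nat \<Rightarrow> real) \<Rightarrow> fmat \<Rightarrow> real" where
  "Lyap f \<rho> = Re (mtrace (mmul (fN (\<lambda>n. complex_of_real (f n))) \<rho>))"

definition alpha_n :: "nat \<Rightarrow> nat \<Rightarrow> real" where
  "alpha_n nbar n = pi * sqrt ((real n + 1) / (real nbar + 1))"

definition beta_n :: "real \<Rightarrow> nat \<Rightarrow> real" where
  "beta_n th2 n = th2 * sqrt (real n) / 2"

text \<open>The defining equations of f (they determine f uniquely).\<close>
definition is_f :: "nat \<Rightarrow> real \<Rightarrow> real \<Rightarrow> (nat \<Rightarrow> real) \<Rightarrow> bool" where
  "is_f nbar th2 \<eta> f \<longleftrightarrow>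
     f nbar = 0 \<and> f (nbar + 1) = 1 \<and> f (nbar - 1) = 1 \<and>
     (\<forall>n. 0 < n \<and> n < nbar \<longrightarrow>
        f (n - 1) = f n + \<eta> * (sin (alpha_n nbar n / 2))\<^sup>2 * (cos (beta_n th2 n / 2))\<^sup>2
                         * (f n - f (n + 1))) \<and>
     (\<forall>n. nbar < n \<and> n < 4 * nbar + 3 \<longrightarrow>
        f (n + 1) = f n + \<eta> * (sin (beta_n th2 n / 2))\<^sup>2 * (f n - f (n - 1))) \<and>
     (\<forall>n. 4 * nbar + 3 < n \<longrightarrow> f n = f (4 * nbar + 3))"

end

theory Submission
  imports Defs
begin

text \<open>
  All three Kraus operators are tridiagonal in the Fock basis (M_g raises, M_e is diagonal,
  M_m lowers the photon number), so the Kraus map acts on populations like a birth-death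
  chain, and its dual acts on diagonal observables f(N) like the corresponding transition
  operator.
\<close>

lemma infsum_single:
  fixes g :: "nat \<Rightarrow> complex"
  assumes "\<And>k. k \<noteq> a \<Longrightarrow> g k = 0"
  shows "infsum g UNIV = g a"
proof -
  have "infsum g UNIV = infsum g {a}"
    by (rule infsum_cong_neutral) (use assms in auto)
  thus ?thesis by simp
qed

lemma infsum_atMost:
  fixes g :: "nat \<Rightarrow> complex"
  assumes "\<And>n. D < n \<Longrightarrow> g n = 0"
  shows "infsum g UNIV = (\<Sum>n\<le>D. g n)"
proof -
  have "infsum g UNIV = infsum g {..D}"
    by (rule infsum_cong_neutral) (use assms in auto)
  thus ?thesis by simp
qed

lemma mmul_fN_right: "mmul A (fN h) i j = A i j * h j"
  unfolding mmul_def fN_def by (subst infsum_single[where a=j]) auto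

lemma mmul_fN_left: "mmul (fN h) B i j = h i * B i j"
  unfolding mmul_def fN_def by (subst infsum_single[where a=i]) auto

lemma mmul_adj_fN: "mmul B (adj (fN h)) i j = B i j * cnj (h j)"
  unfolding mmul_def adj_def fN_def by (subst infsum_single[where a=j]) auto

lemma mmul_raising:
  assumes "\<And>i l. U i l = (if i = Suc l then u l else 0)"
  shows "mmul U B i k = (if i = 0 then 0 else u (i - 1) * B (i - 1) k)"
  unfolding mmul_def assms by (subst infsum_single[where a="i - 1"]) auto

lemma mmul_adj_raising:
  assumes "\<And>i l. U i l = (if i = Suc l then u l else 0)"
  shows "mmul B (adj U) i j = (if j = 0 then 0 else B i (j - 1) * cnj (u (j - 1)))"
  unfolding mmul_def adj_def assms by (subst infsum_single[where a="j - 1"]) auto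

lemma mmul_lowering:
  assumes "\<And>i l. W i l = (if l = Suc i then w i else 0)"
  shows "mmul W B i k = w i * B (Suc i) k"
  unfolding mmul_def assms by (subst infsum_single[where a="Suc i"]) auto

lemma mmul_adj_lowering:
  assumes "\<And>i l. W i l = (if l = Suc i then w i else 0)"
  shows "mmul B (adj W) i j = B i (Suc j) * cnj (w j)"
  unfolding mmul_def adj_def assms by (subst infsum_single[where a="Suc j"]) auto

definition supp :: "nat \<Rightarrow> fmat \<Rightarrow> bool" where
  "supp D \<rho> \<longleftrightarrow> (\<forall>i j. (D < i \<or> D < j) \<longrightarrow> \<rho> i j = 0)"

lemma mtrace_supp: "supp D \<rho> \<Longrightarrow> mtrace \<rho> = (\<Sum>n\<le>D. \<rho> n n)"
  unfolding mtrace_def supp_def by (rule infsum_atMost) auto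

lemma Lyap_supp: "supp D \<rho> \<Longrightarrow> Lyap f \<rho> = (\<Sum>n\<le>D. f n * Re (\<rho> n n))"
proof -
  assume s: "supp D \<rho>"
  have "mtrace (mmul (fN (\<lambda>n. complex_of_real (f n))) \<rho>) = (\<Sum>n\<le>D. complex_of_real (f n) * \<rho> n n)"
    unfolding mtrace_def mmul_fN_left using s unfolding supp_def by (intro infsum_atMost) auto
  thus ?thesis unfolding Lyap_def by (simp add: Re_sum)
qed

text \<open>The consequences of being a density operator that the convergence proof uses: support,
  a real nonnegative diagonal, the 2x2 Cauchy-Schwarz inequality for entries, and unit trace.
  Unlike positivity, these are easily seen to be preserved by the Kraus map.\<close>
definition weak_density :: "nat \<Rightarrow> fmat \<Rightarrow> bool" where
  "weak_density D \<rho> \<longleftrightarrow> supp D \<rho> \<and> (\<forall>i. Im (\<rho> i i) = 0 \<and> 0 \<le> Re (\<rho> i i)) \<and>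
     (\<forall>i j. (cmod (\<rho> i j))\<^sup>2 \<le> Re (\<rho> i i) * Re (\<rho> j j)) \<and> (\<Sum>n\<le>D. \<rho> n n) = 1"

lemma sum_atMost_two:
  fixes g :: "nat \<Rightarrow> 'a::comm_monoid_add"
  assumes "i \<le> D" "j \<le> D" "i \<noteq> j" "\<And>a. a \<noteq> i \<Longrightarrow> a \<noteq> j \<Longrightarrow> g a = 0"
  shows "(\<Sum>a\<le>D. g a) = g i + g j"
proof -
  have "(\<Sum>a\<le>D. g a) = (\<Sum>a\<in>{i,j}. g a)"
    by (rule sum.mono_neutral_right) (use assms in auto)
  thus ?thesis using assms(3) by simp
qed

lemma sum_atMost_one:
  fixes g :: "nat \<Rightarrow> 'a::comm_monoid_add"
  assumes "i \<le> D" "\<And>a. a \<noteq> i \<Longrightarrow> g a = 0"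
  shows "(\<Sum>a\<le>D. g a) = g i"
proof -
  have "(\<Sum>a\<le>D. g a) = (\<Sum>a\<in>{i}. g a)"
    by (rule sum.mono_neutral_right) (use assms in auto)
  thus ?thesis by simp
qed

lemma quadratic_form_two_point:
  fixes \<rho> :: fmat and v :: "nat \<Rightarrow> complex"
  assumes "i \<le> D" "j \<le> D" "i \<noteq> j" "\<And>k. k \<noteq> i \<Longrightarrow> k \<noteq> j \<Longrightarrow> v k = 0"
  shows "(\<Sum>a\<le>D. \<Sum>b\<le>D. cnj (v a) * \<rho> a b * v b)
       = cnj (v i) * \<rho> i i * v i + cnj (v i) * \<rho> i j * v j
       + cnj (v j) * \<rho> j i * v i + cnj (v j) * \<rho> j j * v j"
proof -
  have inner: "(\<Sum>b\<le>D. cnj (v a) * \<rho> a b * v b) = cnj (v a) * \<rho> a i * v i + cnj (v a) * \<rho> a j * v j"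
    for a by (rule sum_atMost_two) (use assms in auto)
  have "(\<Sum>a\<le>D. \<Sum>b\<le>D. cnj (v a) * \<rho> a b * v b)
      = (\<Sum>b\<le>D. cnj (v i) * \<rho> i b * v b) + (\<Sum>b\<le>D. cnj (v j) * \<rho> j b * v b)"
    by (rule sum_atMost_two) (use assms in auto)
  thus ?thesis unfolding inner by (simp add: add.assoc)
qed

lemma nonneg_quadratic_discriminant:
  fixes p q c :: real
  assumes "0 \<le> p" "0 \<le> c" "\<And>t. 0 \<le> p * (t * t) - 2 * t * c + q"
  shows "c * c \<le> p * q"
proof (cases "p = 0")
  case True
  show ?thesis
  proof (rule ccontr)
    assume "\<not> c * c \<le> p * q"
    hence c: "0 < c" using True assms(2) by (cases "c = 0") auto
    have "0 \<le> p * (((q+1)/(2*c)) * ((q+1)/(2*c))) - 2 * ((q+1)/(2*c)) * c + q" by (rule assms(3))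
    also have "\<dots> = -1" using True c by (simp add: field_simps)
    finally show False by simp
  qed
next
  case False
  hence p: "0 < p" using assms(1) by simp
  have "0 \<le> p * ((c/p) * (c/p)) - 2 * (c/p) * c + q" by (rule assms(3))
  also have "\<dots> = q - c * c / p" using p by (simp add: field_simps)
  finally have "c * c / p \<le> q" by simp
  thus ?thesis using p by (simp add: divide_le_eq mult.commute)
qed

definition shift_amp :: "(nat \<Rightarrow> real) \<Rightarrow> nat \<Rightarrow> real" where
  "shift_amp a i = (if i = 0 then 0 else a (i - 1))"

text \<open>A tridiagonal Kraus map: three Kraus operators with real amplitudes, one raising the photon
  number (amplitudes a), one diagonal (amplitudes e), one lowering it (amplitudes c, up to a phase).\<close>
definition tri_kraus :: "(nat \<Rightarrow> real) \<Rightarrow> (nat \<Rightarrow> real) \<Rightarrow> (nat \<Rightarrow> real) \<Rightarrow> fmat \<Rightarrow> fmat" where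
  "tri_kraus a e c \<rho> = (\<lambda>i j.
       complex_of_real (shift_amp a i * shift_amp a j) * \<rho> (i - 1) (j - 1)
     + complex_of_real (e i * e j) * \<rho> i j
     + complex_of_real (c (Suc i) * c (Suc j)) * \<rho> (Suc i) (Suc j))"

text \<open>Its dual action on diagonal observables w(N): the expected value of w after one step
  started in |n>, i.e. a birth-death transition operator.\<close>
definition dual :: "(nat \<Rightarrow> real) \<Rightarrow> (nat \<Rightarrow> real) \<Rightarrow> (nat \<Rightarrow> real) \<Rightarrow> (nat \<Rightarrow> real) \<Rightarrow> nat \<Rightarrow> real" where
  "dual a e c w n = (a n)\<^sup>2 * w (Suc n) + (e n)\<^sup>2 * w n + (c n)\<^sup>2 * w (n - 1)"

lemma cauchy_schwarz_3:
  fixes x1 x2 x3 y1 y2 y3 :: real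
  shows "(x1*y1 + x2*y2 + x3*y3)\<^sup>2 \<le> (x1\<^sup>2 + x2\<^sup>2 + x3\<^sup>2) * (y1\<^sup>2 + y2\<^sup>2 + y3\<^sup>2)"
proof -
  have "(x1\<^sup>2 + x2\<^sup>2 + x3\<^sup>2) * (y1\<^sup>2 + y2\<^sup>2 + y3\<^sup>2) - (x1*y1 + x2*y2 + x3*y3)\<^sup>2
      = (x1*y2 - x2*y1)\<^sup>2 + (x1*y3 - x3*y1)\<^sup>2 + (x2*y3 - x3*y2)\<^sup>2"
    by (simp add: power2_eq_square algebra_simps)
  moreover have "0 \<le> (x1*y2 - x2*y1)\<^sup>2 + (x1*y3 - x3*y1)\<^sup>2 + (x2*y3 - x3*y2)\<^sup>2" by simp
  ultimately show ?thesis by linarith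
qed

lemma weighted_entry_bound:
  fixes z :: complex and a b P Q :: real
  assumes "(cmod z)\<^sup>2 \<le> P * Q" "0 \<le> P" "0 \<le> Q"
  shows "cmod (complex_of_real (a * b) * z) \<le> (\<bar>a\<bar> * sqrt P) * (\<bar>b\<bar> * sqrt Q)"
proof -
  have "cmod z = sqrt ((cmod z)\<^sup>2)" by simp
  also have "\<dots> \<le> sqrt (P * Q)" using assms(1) by (rule real_sqrt_le_mono)
  finally have "cmod z \<le> sqrt P * sqrt Q" by (simp add: real_sqrt_mult)
  hence "\<bar>a\<bar> * \<bar>b\<bar> * cmod z \<le> \<bar>a\<bar> * \<bar>b\<bar> * (sqrt P * sqrt Q)" by (intro mult_left_mono) auto
  thus ?thesis by (simp add: norm_mult abs_mult mult_ac)
qed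

lemma entry_bound_3:
  fixes z1 z2 z3 :: complex and a1 a2 a3 b1 b2 b3 P1 P2 P3 Q1 Q2 Q3 :: real
  assumes "0 \<le> P1" "0 \<le> P2" "0 \<le> P3" "0 \<le> Q1" "0 \<le> Q2" "0 \<le> Q3"
    and "(cmod z1)\<^sup>2 \<le> P1 * Q1" "(cmod z2)\<^sup>2 \<le> P2 * Q2" "(cmod z3)\<^sup>2 \<le> P3 * Q3"
  shows "(cmod (complex_of_real (a1*b1) * z1 + complex_of_real (a2*b2) * z2 + complex_of_real (a3*b3) * z3))\<^sup>2
         \<le> (a1*a1*P1 + a2*a2*P2 + a3*a3*P3) * (b1*b1*Q1 + b2*b2*Q2 + b3*b3*Q3)"
proof -
  let ?x = "\<lambda>a P. \<bar>a\<bar> * sqrt P"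
  have "cmod (complex_of_real (a1*b1) * z1 + complex_of_real (a2*b2) * z2 + complex_of_real (a3*b3) * z3)
      \<le> cmod (complex_of_real (a1*b1) * z1) + cmod (complex_of_real (a2*b2) * z2) + cmod (complex_of_real (a3*b3) * z3)"
    by (rule order_trans[OF norm_triangle_ineq add_right_mono[OF norm_triangle_ineq]])
  also have "\<dots> \<le> ?x a1 P1 * ?x b1 Q1 + ?x a2 P2 * ?x b2 Q2 + ?x a3 P3 * ?x b3 Q3"
    using weighted_entry_bound assms by (meson add_mono)
  finally have "(cmod (complex_of_real (a1*b1) * z1 + complex_of_real (a2*b2) * z2 + complex_of_real (a3*b3) * z3))\<^sup>2
      \<le> (?x a1 P1 * ?x b1 Q1 + ?x a2 P2 * ?x b2 Q2 + ?x a3 P3 * ?x b3 Q3)\<^sup>2"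
    by (intro power_mono) auto
  also have "\<dots> \<le> ((?x a1 P1)\<^sup>2 + (?x a2 P2)\<^sup>2 + (?x a3 P3)\<^sup>2) * ((?x b1 Q1)\<^sup>2 + (?x b2 Q2)\<^sup>2 + (?x b3 Q3)\<^sup>2)"
    by (rule cauchy_schwarz_3)
  also have "\<dots> = (a1*a1*P1 + a2*a2*P2 + a3*a3*P3) * (b1*b1*Q1 + b2*b2*Q2 + b3*b3*Q3)"
    using assms by (simp add: power_mult_distrib power2_eq_square[symmetric])
  finally show ?thesis .
qed

text \<open>A tridiagonal channel is trace preserving (the three transition probabilities out of every
  |n> sum to 1), cannot lower |0>, and cannot raise |D>; so span{|0>,...,|D>} is invariant.\<close>
locale tridiagonal_channel =
  fixes a e c :: "nat \<Rightarrow> real" and D :: nat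
  assumes probabilities: "\<And>n. (a n)\<^sup>2 + (e n)\<^sup>2 + (c n)\<^sup>2 = 1"
    and no_lowering_0: "c 0 = 0"
    and no_raising_D: "a D = 0"
begin

abbreviation K :: "fmat \<Rightarrow> fmat" where "K \<equiv> tri_kraus a e c"

lemma dual_minus:
  "dual a e c w n - w n = (a n)\<^sup>2 * (w (Suc n) - w n) + (c n)\<^sup>2 * (w (n - 1) - w n)"
proof -
  have "dual a e c w n - w n = dual a e c w n - w n * ((a n)\<^sup>2 + (e n)\<^sup>2 + (c n)\<^sup>2)"
    using probabilities[of n] by simp
  also have "\<dots> = (a n)\<^sup>2 * (w (Suc n) - w n) + (c n)\<^sup>2 * (w (n - 1) - w n)"
    unfolding dual_def by (simp add: algebra_simps)
  finally show ?thesis .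
qed

lemma dual_const: "dual a e c (\<lambda>_. 1) n = 1"
  unfolding dual_def using probabilities[of n] by simp

lemma K_diag: "K \<rho> n n =
     complex_of_real ((shift_amp a n)\<^sup>2) * \<rho> (n - 1) (n - 1)
   + complex_of_real ((e n)\<^sup>2) * \<rho> n n
   + complex_of_real ((c (Suc n))\<^sup>2) * \<rho> (Suc n) (Suc n)"
  unfolding tri_kraus_def by (simp add: power2_eq_square)

lemma supp_K:
  assumes "supp D \<rho>"
  shows "supp D (K \<rho>)"
  unfolding supp_def
proof (intro allI impI)
  fix i j assume ij: "D < i \<or> D < j"
  have "complex_of_real (shift_amp a i * shift_amp a j) * \<rho> (i - 1) (j - 1) = 0"
  proof (cases "i - 1 = D \<or> j - 1 = D")
    case True
    hence "shift_amp a i * shift_amp a j = 0" using ij no_raising_D unfolding shift_amp_def by auto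
    thus ?thesis by simp
  next
    case False
    hence "D < i - 1 \<or> D < j - 1" using ij by auto
    thus ?thesis using assms unfolding supp_def by auto
  qed
  thus "K \<rho> i j = 0" unfolding tri_kraus_def using assms ij unfolding supp_def by auto
qed

lemma diag_duality:
  assumes "supp D \<rho>"
  shows "(\<Sum>n\<le>D. complex_of_real (w n) * K \<rho> n n)
       = (\<Sum>n\<le>D. complex_of_real (dual a e c w n) * \<rho> n n)"
proof -
  let ?r = "\<lambda>n. complex_of_real (w n)"
  let ?sq = "\<lambda>x. complex_of_real (x\<^sup>2)"
  have \<rho>D: "\<rho> (Suc D) (Suc D) = 0" using assms unfolding supp_def by simp
  have raising: "(\<Sum>n\<le>D. ?r n * (?sq (shift_amp a n) * \<rho> (n - 1) (n - 1)))
      = (\<Sum>n\<le>D. ?sq (a n) * ?r (Suc n) * \<rho> n n)"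
  proof -
    have "(\<Sum>n\<le>D. ?r n * (?sq (shift_amp a n) * \<rho> (n - 1) (n - 1)))
        = (\<Sum>n\<le>Suc D. ?r n * (?sq (shift_amp a n) * \<rho> (n - 1) (n - 1)))"
      using no_raising_D by (simp add: shift_amp_def)
    also have "\<dots> = (\<Sum>n\<le>D. ?sq (a n) * ?r (Suc n) * \<rho> n n)"
      by (subst sum.atMost_Suc_shift) (simp add: shift_amp_def mult_ac)
    finally show ?thesis .
  qed
  have lowering: "(\<Sum>n\<le>D. ?r n * (?sq (c (Suc n)) * \<rho> (Suc n) (Suc n)))
      = (\<Sum>n\<le>D. ?sq (c n) * ?r (n - 1) * \<rho> n n)"
  proof -
    have "(\<Sum>n\<le>D. ?sq (c n) * ?r (n - 1) * \<rho> n n) = (\<Sum>n\<le>Suc D. ?sq (c n) * ?r (n - 1) * \<rho> n n)"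
      using \<rho>D by simp
    also have "\<dots> = (\<Sum>n\<le>D. ?r n * (?sq (c (Suc n)) * \<rho> (Suc n) (Suc n)))"
      by (subst sum.atMost_Suc_shift) (simp add: no_lowering_0 mult_ac)
    finally show ?thesis by simp
  qed
  have "(\<Sum>n\<le>D. ?r n * K \<rho> n n)
      = (\<Sum>n\<le>D. ?r n * (?sq (shift_amp a n) * \<rho> (n - 1) (n - 1)))
      + (\<Sum>n\<le>D. ?sq (e n) * ?r n * \<rho> n n)
      + (\<Sum>n\<le>D. ?r n * (?sq (c (Suc n)) * \<rho> (Suc n) (Suc n)))"
    unfolding K_diag by (simp add: sum.distrib algebra_simps)
  also have "\<dots> = (\<Sum>n\<le>D. complex_of_real (dual a e c w n) * \<rho> n n)"
    unfolding raising lowering dual_def by (simp add: sum.distrib algebra_simps)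
  finally show ?thesis .
qed

lemma weak_density_K:
  assumes "weak_density D \<rho>"
  shows "weak_density D (K \<rho>)"
proof -
  have s: "supp D \<rho>" and im: "\<And>i. Im (\<rho> i i) = 0" and re: "\<And>i. 0 \<le> Re (\<rho> i i)"
    and cs: "\<And>i j. (cmod (\<rho> i j))\<^sup>2 \<le> Re (\<rho> i i) * Re (\<rho> j j)"
    and tr: "(\<Sum>n\<le>D. \<rho> n n) = 1"
    using assms unfolding weak_density_def by auto
  have Re_K: "Re (K \<rho> i i) = shift_amp a i * shift_amp a i * Re (\<rho> (i - 1) (i - 1))
      + e i * e i * Re (\<rho> i i) + c (Suc i) * c (Suc i) * Re (\<rho> (Suc i) (Suc i))" for i
    unfolding tri_kraus_def by simp
  have Im_K: "Im (K \<rho> i i) = 0" for i unfolding tri_kraus_def using im by simp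
  have Re_K_nonneg: "0 \<le> Re (K \<rho> i i)" for i
    unfolding Re_K using re by (intro add_nonneg_nonneg mult_nonneg_nonneg[OF zero_le_square])
  have cs_K: "(cmod (K \<rho> i j))\<^sup>2 \<le> Re (K \<rho> i i) * Re (K \<rho> j j)" for i j
    unfolding Re_K unfolding tri_kraus_def by (rule entry_bound_3) (use re cs in auto)
  have "(\<Sum>n\<le>D. K \<rho> n n) = (\<Sum>n\<le>D. complex_of_real 1 * K \<rho> n n)" by simp
  also have "\<dots> = (\<Sum>n\<le>D. complex_of_real (dual a e c (\<lambda>_. 1) n) * \<rho> n n)"
    by (rule diag_duality[OF s])
  also have "\<dots> = 1" unfolding dual_const using tr by simp
  finally show ?thesis unfolding weak_density_def using supp_K[OF s] Im_K Re_K_nonneg cs_K by blast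
qed

lemma weak_density_K_iter: "weak_density D \<rho> \<Longrightarrow> weak_density D ((K ^^ k) \<rho>)"
  by (induction k) (auto intro: weak_density_K)

end

text \<open>Density operators (in the sense of the statement) are weak densities: the diagonal is real
  and nonnegative, and Cauchy-Schwarz for entries follows from positivity on two-point vectors.\<close>
lemma density_onD:
  assumes "density_on D \<rho>"
  shows density_supp: "supp D \<rho>"
    and density_hermitian: "\<rho> j i = cnj (\<rho> i j)"
    and density_psd: "0 \<le> Re (\<Sum>i\<le>D. \<Sum>j\<le>D. cnj (v i) * \<rho> i j * v j)"
    and density_trace: "mtrace \<rho> = 1"
  using assms unfolding density_on_def supp_def by blast+

lemma density_diag_nonneg:
  assumes "density_on D \<rho>"
  shows "0 \<le> Re (\<rho> i i)"
proof (cases "i \<le> D")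
  case False
  hence "\<rho> i i = 0" using density_supp[OF assms] unfolding supp_def by simp
  thus ?thesis by simp
next
  case True
  define v :: "nat \<Rightarrow> complex" where "v = (\<lambda>k. if k = i then 1 else 0)"
  have "(\<Sum>a\<le>D. \<Sum>b\<le>D. cnj (v a) * \<rho> a b * v b) = (\<Sum>b\<le>D. cnj (v i) * \<rho> i b * v b)"
    by (rule sum_atMost_one[OF True]) (simp add: v_def)
  also have "\<dots> = cnj (v i) * \<rho> i i * v i"
    by (rule sum_atMost_one[OF True]) (simp add: v_def)
  moreover note density_psd[OF assms, of v]
  ultimately show ?thesis by (simp add: v_def)
qed

text \<open>Positivity on the two-point vectors t|i> - conj(rho_ij)|j> gives a nonnegative quadratic
  polynomial in t, whose discriminant condition is the Cauchy-Schwarz inequality for entries.\<close>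
lemma density_two_point:
  assumes "density_on D \<rho>" "i \<le> D" "j \<le> D" "i \<noteq> j"
  shows "0 \<le> Re (\<rho> i i) * (t * t) - 2 * t * (cmod (\<rho> i j))\<^sup>2 + (cmod (\<rho> i j))\<^sup>2 * Re (\<rho> j j)"
proof -
  define z where "z = \<rho> i j"
  have zj: "\<rho> j i = cnj z" unfolding z_def by (rule density_hermitian[OF assms(1)])
  have zz: "z * cnj z = complex_of_real ((cmod z)\<^sup>2)" by (rule complex_norm_square[symmetric])
  define v :: "nat \<Rightarrow> complex"
    where "v = (\<lambda>k. if k = i then complex_of_real t else if k = j then - cnj z else 0)"
  have vi: "v i = complex_of_real t" and vj: "v j = - cnj z" unfolding v_def using assms(4) by auto
  have "(\<Sum>a\<le>D. \<Sum>b\<le>D. cnj (v a) * \<rho> a b * v b)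
      = cnj (v i) * \<rho> i i * v i + cnj (v i) * \<rho> i j * v j
      + cnj (v j) * \<rho> j i * v i + cnj (v j) * \<rho> j j * v j"
    by (rule quadratic_form_two_point) (use assms(2-4) in \<open>auto simp: v_def\<close>)
  also have "\<dots> = complex_of_real t * \<rho> i i * complex_of_real t - complex_of_real t * (z * cnj z)
        - z * cnj z * complex_of_real t + z * cnj z * \<rho> j j"
    unfolding vi vj zj z_def[symmetric] by (simp add: algebra_simps)
  also have "\<dots> = complex_of_real (t * t) * \<rho> i i - 2 * complex_of_real t * complex_of_real ((cmod z)\<^sup>2)
      + complex_of_real ((cmod z)\<^sup>2) * \<rho> j j"
    unfolding zz by (simp add: algebra_simps)
  finally show ?thesis using density_psd[OF assms(1), of v] unfolding z_def by (simp add: mult_ac)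
qed

lemma density_cauchy_schwarz:
  assumes "density_on D \<rho>"
  shows "(cmod (\<rho> i j))\<^sup>2 \<le> Re (\<rho> i i) * Re (\<rho> j j)"
proof -
  have re: "\<And>i. 0 \<le> Re (\<rho> i i)" using density_diag_nonneg[OF assms] .
  consider "\<not> (i \<le> D \<and> j \<le> D)" | "i = j" | "i \<le> D" "j \<le> D" "i \<noteq> j" by blast
  thus ?thesis
  proof cases
    case 1
    hence "D < i \<or> D < j" by auto
    hence "\<rho> i j = 0" using density_supp[OF assms] unfolding supp_def by blast
    thus ?thesis using re by simp
  next
    case 2
    have "\<rho> i i = complex_of_real (Re (\<rho> i i))"
      using density_hermitian[OF assms, of i i] by (simp add: complex_eq_iff)
    hence "cmod (\<rho> i i) = \<bar>Re (\<rho> i i)\<bar>" by (metis norm_of_real)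
    thus ?thesis using 2 by (simp add: power2_eq_square)
  next
    case 3
    let ?z = "(cmod (\<rho> i j))\<^sup>2"
    have "?z * ?z \<le> Re (\<rho> i i) * (?z * Re (\<rho> j j))"
      by (rule nonneg_quadratic_discriminant) (use re density_two_point[OF assms 3] in auto)
    hence m: "?z * ?z \<le> ?z * (Re (\<rho> i i) * Re (\<rho> j j))" by (simp add: mult_ac)
    show ?thesis
    proof (cases "?z = 0")
      case True thus ?thesis using re by simp
    next
      case False
      hence "0 < ?z" by simp
      from mult_left_le_imp_le[OF m this] show ?thesis .
    qed
  qed
qed

lemma density_weak_density:
  assumes "density_on D \<rho>"
  shows "weak_density D \<rho>"
proof -
  have s: "supp D \<rho>" by (rule density_supp[OF assms])
  have im: "Im (\<rho> i i) = 0" for i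
  proof -
    have "\<rho> i i = cnj (\<rho> i i)" by (rule density_hermitian[OF assms])
    thus ?thesis by (metis cnj.simps(2) neg_equal_zero)
  qed
  have "(\<Sum>n\<le>D. \<rho> n n) = 1" using density_trace[OF assms] mtrace_supp[OF s] by simp
  thus ?thesis unfolding weak_density_def
    using s im density_diag_nonneg[OF assms] density_cauchy_schwarz[OF assms] by blast
qed

lemma weak_density_pure:
  assumes w: "weak_density D \<rho>" and mD: "m \<le> D"
    and z: "\<And>n. n \<le> D \<Longrightarrow> n \<noteq> m \<Longrightarrow> Re (\<rho> n n) = 0"
  shows "\<rho> = ketbra m"
proof -
  have s: "supp D \<rho>" and c: "\<And>i j. (cmod (\<rho> i j))\<^sup>2 \<le> Re (\<rho> i i) * Re (\<rho> j j)"
    and tr: "(\<Sum>n\<le>D. \<rho> n n) = 1"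
    using w unfolding weak_density_def by auto
  have diag0: "Re (\<rho> n n) = 0" if "n \<noteq> m" for n
  proof (cases "n \<le> D")
    case True thus ?thesis using z that by blast
  next
    case False thus ?thesis using s unfolding supp_def by simp
  qed
  have off: "\<rho> i j = 0" if "i \<noteq> m \<or> j \<noteq> m" for i j
  proof -
    have "Re (\<rho> i i) * Re (\<rho> j j) = 0" using that diag0 by auto
    hence "(cmod (\<rho> i j))\<^sup>2 \<le> 0" using c[of i j] by linarith
    thus ?thesis by simp
  qed
  have "(\<Sum>n\<le>D. \<rho> n n) = \<rho> m m" by (rule sum_atMost_one[OF mD]) (use off in auto)
  hence one: "\<rho> m m = 1" using tr by simp
  show ?thesis
  proof (intro ext)
    fix i j show "\<rho> i j = ketbra m i j" unfolding ketbra_def using off one by auto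
  qed
qed

locale lyapunov_channel = tridiagonal_channel +
  fixes m :: nat and f :: "nat \<Rightarrow> real"
  assumes target_le: "m \<le> D"
    and f_target: "f m = 0"
    and f_ge_1: "\<And>n. n \<le> D \<Longrightarrow> n \<noteq> m \<Longrightarrow> 1 \<le> f n"
    and dual_target: "dual a e c f m \<le> 0"
    and dual_less: "\<And>n. n \<le> D \<Longrightarrow> n \<noteq> m \<Longrightarrow> dual a e c f n < f n"
begin

lemma f_nonneg: "n \<le> D \<Longrightarrow> 0 \<le> f n"
  using f_ge_1 f_target by (cases "n = m") force+

lemma dual_le: "n \<le> D \<Longrightarrow> dual a e c f n \<le> f n"
  using dual_less dual_target f_target by (cases "n = m") (auto intro: less_imp_le)

lemma Lyap_nonneg: "weak_density D \<rho> \<Longrightarrow> 0 \<le> Lyap f \<rho>"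
  unfolding weak_density_def using Lyap_supp f_nonneg
  by (auto intro!: sum_nonneg mult_nonneg_nonneg)

lemma Lyap_K:
  assumes "weak_density D \<rho>"
  shows "Lyap f (K \<rho>) = (\<Sum>n\<le>D. dual a e c f n * Re (\<rho> n n))"
proof -
  have s: "supp D \<rho>" using assms unfolding weak_density_def by blast
  have "Lyap f (K \<rho>) = Re (\<Sum>n\<le>D. complex_of_real (f n) * K \<rho> n n)"
    by (simp add: Lyap_supp[OF supp_K[OF s]] Re_sum)
  also have "\<dots> = (\<Sum>n\<le>D. dual a e c f n * Re (\<rho> n n))"
    unfolding diag_duality[OF s] by (simp add: Re_sum)
  finally show ?thesis .
qed

lemma Lyap_strict_decrease:
  assumes w: "weak_density D \<rho>" and nt: "\<rho> \<noteq> ketbra m"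
  shows "Lyap f (K \<rho>) < Lyap f \<rho>"
proof -
  have s: "supp D \<rho>" and re: "\<And>i. 0 \<le> Re (\<rho> i i)" using w unfolding weak_density_def by auto
  obtain n where n: "n \<le> D" "n \<noteq> m" "Re (\<rho> n n) \<noteq> 0"
    using weak_density_pure[OF w target_le] nt by blast
  have "(\<Sum>k\<le>D. dual a e c f k * Re (\<rho> k k)) < (\<Sum>k\<le>D. f k * Re (\<rho> k k))"
  proof (rule sum_strict_mono_ex1)
    show "\<forall>k\<in>{..D}. dual a e c f k * Re (\<rho> k k) \<le> f k * Re (\<rho> k k)"
      using dual_le re by (auto intro!: mult_right_mono)
    show "\<exists>k\<in>{..D}. dual a e c f k * Re (\<rho> k k) < f k * Re (\<rho> k k)"
      using n re[of n] dual_less[of n] by (intro bexI[of _ n]) auto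
  qed simp
  thus ?thesis unfolding Lyap_K[OF w] Lyap_supp[OF s] .
qed

text \<open>Since the state space is finite, the strict decrease is uniform: a contraction rate.\<close>
definition rate :: real where
  "rate = Max (insert 0 ((\<lambda>n. dual a e c f n / f n) ` ({..D} - {m})))"

lemma rate_nonneg: "0 \<le> rate"
  unfolding rate_def by (rule Max_ge) auto

lemma rate_less_1: "rate < 1"
proof -
  have "dual a e c f n / f n < 1" if "n \<le> D" "n \<noteq> m" for n
    using f_ge_1[OF that] dual_less[OF that] by (simp add: divide_less_eq)
  thus ?thesis unfolding rate_def by (subst Max_less_iff) auto
qed

lemma dual_le_rate: "n \<le> D \<Longrightarrow> dual a e c f n \<le> rate * f n"
proof (cases "n = m")
  case True thus ?thesis using dual_target f_target by simp
next
  case False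
  assume n: "n \<le> D"
  have "dual a e c f n / f n \<le> rate" unfolding rate_def by (rule Max_ge) (use n False in auto)
  thus ?thesis using f_ge_1[OF n False] by (simp add: divide_le_eq mult.commute)
qed

lemma Lyap_contraction:
  assumes w: "weak_density D \<rho>"
  shows "Lyap f (K \<rho>) \<le> rate * Lyap f \<rho>"
proof -
  have s: "supp D \<rho>" and re: "\<And>i. 0 \<le> Re (\<rho> i i)" using w unfolding weak_density_def by auto
  have "Lyap f (K \<rho>) \<le> (\<Sum>n\<le>D. rate * f n * Re (\<rho> n n))"
    unfolding Lyap_K[OF w] using dual_le_rate re by (intro sum_mono mult_right_mono) auto
  thus ?thesis unfolding Lyap_supp[OF s] by (simp add: sum_distrib_left mult_ac)
qed

lemma Lyap_iter_tendsto_0: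
  assumes "weak_density D \<rho>"
  shows "(\<lambda>k. Lyap f ((K ^^ k) \<rho>)) \<longlonglongrightarrow> 0"
proof (rule Lim_null_comparison)
  have bound: "Lyap f ((K ^^ k) \<rho>) \<le> rate ^ k * Lyap f \<rho>" for k
  proof (induction k)
    case (Suc k)
    have "Lyap f ((K ^^ Suc k) \<rho>) \<le> rate * Lyap f ((K ^^ k) \<rho>)"
      using Lyap_contraction[OF weak_density_K_iter[OF assms]] by simp
    also have "\<dots> \<le> rate * (rate ^ k * Lyap f \<rho>)" using Suc rate_nonneg by (rule mult_left_mono)
    finally show ?case by simp
  qed simp
  show "\<forall>\<^sub>F k in sequentially. norm (Lyap f ((K ^^ k) \<rho>)) \<le> rate ^ k * Lyap f \<rho>"
    using bound Lyap_nonneg[OF weak_density_K_iter[OF assms]] by simp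
  show "(\<lambda>k. rate ^ k * Lyap f \<rho>) \<longlonglongrightarrow> 0"
    using rate_nonneg rate_less_1 by (intro tendsto_mult_left_zero LIMSEQ_power_zero) simp
qed

lemma distance_to_target:
  assumes w: "weak_density D \<rho>"
  shows "cmod (\<rho> i j - ketbra m i j) \<le> sqrt (Lyap f \<rho>) + Lyap f \<rho>"
proof -
  have s: "supp D \<rho>" and im: "\<And>i. Im (\<rho> i i) = 0" and re: "\<And>i. 0 \<le> Re (\<rho> i i)"
    and cs: "\<And>i j. (cmod (\<rho> i j))\<^sup>2 \<le> Re (\<rho> i i) * Re (\<rho> j j)"
    and tr: "(\<Sum>n\<le>D. \<rho> n n) = 1"
    using w unfolding weak_density_def by auto
  have L: "Lyap f \<rho> = (\<Sum>n\<le>D. f n * Re (\<rho> n n))" by (rule Lyap_supp[OF s])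
  have L0: "0 \<le> Lyap f \<rho>" by (rule Lyap_nonneg[OF w])
  text \<open>Off-target populations are bounded by V, since f is at least 1 there.\<close>
  have off_sum: "(\<Sum>n\<in>{..D} - {m}. Re (\<rho> n n)) \<le> Lyap f \<rho>"
  proof -
    have "(\<Sum>n\<in>{..D} - {m}. Re (\<rho> n n)) \<le> (\<Sum>n\<in>{..D} - {m}. f n * Re (\<rho> n n))"
    proof (rule sum_mono)
      fix n assume "n \<in> {..D} - {m}"
      hence "1 \<le> f n" using f_ge_1 by auto
      from mult_right_mono[OF this re[of n]] show "Re (\<rho> n n) \<le> f n * Re (\<rho> n n)" by simp
    qed
    also have "\<dots> = Lyap f \<rho>" unfolding L using target_le f_target
      by (subst sum.remove[of _ m]) auto
    finally show ?thesis .
  qed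
  have pop: "Re (\<rho> n n) \<le> Lyap f \<rho>" if "n \<noteq> m" for n
  proof (cases "n \<le> D")
    case True
    have "Re (\<rho> n n) \<le> (\<Sum>k\<in>{..D} - {m}. Re (\<rho> k k))"
      by (rule member_le_sum) (use True that re in auto)
    thus ?thesis using off_sum by linarith
  next
    case False thus ?thesis using s L0 unfolding supp_def by simp
  qed
  have pop_le_1: "Re (\<rho> n n) \<le> 1" for n
  proof (cases "n \<le> D")
    case True
    have "Re (\<rho> n n) \<le> (\<Sum>k\<le>D. Re (\<rho> k k))" by (rule member_le_sum) (use True re in auto)
    also have "\<dots> = 1" using tr by (simp flip: Re_sum)
    finally show ?thesis .
  next
    case False thus ?thesis using s unfolding supp_def by simp
  qed
  show ?thesis
  proof (cases "i = m \<and> j = m")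
    case True
    have "\<rho> m m - 1 = - (\<Sum>n\<in>{..D} - {m}. \<rho> n n)"
      using tr target_le by (subst (asm) sum.remove[of _ m]) (auto simp: algebra_simps)
    also have "\<dots> = - complex_of_real (\<Sum>n\<in>{..D} - {m}. Re (\<rho> n n))"
      using im by (simp add: complex_eq_iff Re_sum Im_sum)
    finally have "cmod (\<rho> m m - 1) = \<bar>\<Sum>n\<in>{..D} - {m}. Re (\<rho> n n)\<bar>"
      by (simp only: norm_minus_cancel norm_of_real)
    hence "cmod (\<rho> m m - 1) \<le> Lyap f \<rho>" using off_sum re by (simp add: sum_nonneg)
    hence "cmod (\<rho> m m - 1) \<le> sqrt (Lyap f \<rho>) + Lyap f \<rho>"
      using real_sqrt_ge_zero[OF L0] by linarith
    thus ?thesis using True unfolding ketbra_def by simp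
  next
    case False
    text \<open>Some index differs from the target; Cauchy-Schwarz bounds the entry by its population.\<close>
    have "Re (\<rho> i i) * Re (\<rho> j j) \<le> Re (\<rho> i i)" by (rule mult_left_le[OF pop_le_1 re])
    moreover have "Re (\<rho> i i) * Re (\<rho> j j) \<le> Re (\<rho> j j)"
      by (rule mult_left_le_one_le[OF re re pop_le_1])
    ultimately obtain n where n: "n \<noteq> m" "Re (\<rho> i i) * Re (\<rho> j j) \<le> Re (\<rho> n n)"
      using False by blast
    have "(cmod (\<rho> i j))\<^sup>2 \<le> Lyap f \<rho>" using cs[of i j] n pop[of n] by linarith
    hence "cmod (\<rho> i j) \<le> sqrt (Lyap f \<rho>)" by (simp add: real_le_rsqrt)
    thus ?thesis using False L0 unfolding ketbra_def by auto
  qed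
qed

theorem convergence_to_target:
  assumes "weak_density D \<rho>"
  shows "(\<lambda>k. (K ^^ k) \<rho> i j) \<longlonglongrightarrow> ketbra m i j"
proof -
  let ?V = "\<lambda>k. Lyap f ((K ^^ k) \<rho>)"
  have "(\<lambda>k. sqrt (?V k) + ?V k) \<longlonglongrightarrow> sqrt 0 + 0"
    using Lyap_iter_tendsto_0[OF assms] by (intro tendsto_add tendsto_real_sqrt)
  hence "(\<lambda>k. sqrt (?V k) + ?V k) \<longlonglongrightarrow> 0" by simp
  hence "(\<lambda>k. (K ^^ k) \<rho> i j - ketbra m i j) \<longlonglongrightarrow> 0"
    by (rule Lim_null_comparison[rotated])
      (use distance_to_target[OF weak_density_K_iter[OF assms]] in simp)
  thus ?thesis by (rule LIM_zero_cancel)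
qed

end

definition amp_up :: "nat \<Rightarrow> real \<Rightarrow> nat \<Rightarrow> real" where
  "amp_up nbar th2 n = (1 + cos (beta_n th2 n)) * sin (alpha_n nbar n) / 2"

definition amp_stay :: "nat \<Rightarrow> real \<Rightarrow> nat \<Rightarrow> real" where
  "amp_stay nbar th2 n = (cos (alpha_n nbar n / 2))\<^sup>2 * cos (beta_n th2 n) - (sin (alpha_n nbar n / 2))\<^sup>2"

definition amp_down :: "nat \<Rightarrow> real \<Rightarrow> nat \<Rightarrow> real" where
  "amp_down nbar th2 n = sin (beta_n th2 n) * cos (alpha_n nbar n / 2)"

lemma alpha_n_eq: "alpha_n nbar n = theta1 nbar * sqrt (real n + 1)"
  unfolding alpha_n_def theta1_def by (simp add: real_sqrt_divide)

lemma Mg_entry: "Mg nbar th2 i j = (if i = Suc j then complex_of_real (amp_up nbar th2 j) else 0)"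
proof -
  define h where "h n = (1 + cos (th2 * sqrt (real n) / 2)) *
       (sin (theta1 nbar * sqrt (real n + 1)) / (2 * sqrt (real n + 1)))" for n
  have "sqrt (real (Suc j)) * h j = amp_up nbar th2 j"
    unfolding h_def amp_up_def alpha_n_eq beta_n_def by (simp add: add.commute)
  hence "complex_of_real (sqrt (real (Suc j))) * complex_of_real (h j) = complex_of_real (amp_up nbar th2 j)"
    by (simp only: of_real_mult[symmetric])
  thus ?thesis unfolding Mg_def mmul_fN_right cre_def adj_def ann_def h_def[symmetric] by auto
qed

lemma Me_eq: "Me nbar th2 = fN (\<lambda>n. complex_of_real (amp_stay nbar th2 n))"
  unfolding Me_def amp_stay_def alpha_n_eq beta_n_def ..

lemma Mm_entry:
  "Mm nbar th2 \<phi> i j =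
     (if j = Suc i then exp (\<i> * complex_of_real \<phi>) * complex_of_real (amp_down nbar th2 (Suc i)) else 0)"
proof -
  define h where "h n = sin (th2 * sqrt (real n) / 2) / sqrt (real n) *
      cos (theta1 nbar * sqrt (real n + 1) / 2)" for n
  have "sqrt (real (Suc i)) * h (Suc i) = amp_down nbar th2 (Suc i)"
    unfolding h_def amp_down_def alpha_n_eq beta_n_def by simp
  hence "complex_of_real (sqrt (real (Suc i))) * complex_of_real (h (Suc i))
      = complex_of_real (amp_down nbar th2 (Suc i))"
    by (simp only: of_real_mult[symmetric])
  thus ?thesis unfolding Mm_def smul_def mmul_fN_right ann_def h_def[symmetric] by auto
qed

lemma unit_phase: "exp (\<i> * complex_of_real \<phi>) * cnj (exp (\<i> * complex_of_real \<phi>)) = 1"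
  by (simp add: exp_cnj exp_minus)

lemma Kraus_eq:
  "Kraus nbar th2 \<phi> = tri_kraus (amp_up nbar th2) (amp_stay nbar th2) (amp_down nbar th2)"
proof (intro ext)
  fix \<rho> i j
  let ?u = "exp (\<i> * complex_of_real \<phi>)"
  have g: "mmul (mmul (Mg nbar th2) \<rho>) (adj (Mg nbar th2)) i j
      = complex_of_real (shift_amp (amp_up nbar th2) i * shift_amp (amp_up nbar th2) j) * \<rho> (i - 1) (j - 1)"
    by (simp add: mmul_adj_raising[OF Mg_entry] mmul_raising[OF Mg_entry] shift_amp_def)
  have e: "mmul (mmul (Me nbar th2) \<rho>) (adj (Me nbar th2)) i j
      = complex_of_real (amp_stay nbar th2 i * amp_stay nbar th2 j) * \<rho> i j"
    by (simp add: Me_eq mmul_adj_fN mmul_fN_left)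
  have "mmul (mmul (Mm nbar th2 \<phi>) \<rho>) (adj (Mm nbar th2 \<phi>)) i j
      = (?u * cnj ?u) * (complex_of_real (amp_down nbar th2 (Suc i) * amp_down nbar th2 (Suc j)) * \<rho> (Suc i) (Suc j))"
    by (simp add: mmul_adj_lowering[OF Mm_entry] mmul_lowering[OF Mm_entry] mult_ac)
  hence m: "mmul (mmul (Mm nbar th2 \<phi>) \<rho>) (adj (Mm nbar th2 \<phi>)) i j
      = complex_of_real (amp_down nbar th2 (Suc i) * amp_down nbar th2 (Suc j)) * \<rho> (Suc i) (Suc j)"
    by (simp only: unit_phase mult_1)
  show "Kraus nbar th2 \<phi> \<rho> i j = tri_kraus (amp_up nbar th2) (amp_stay nbar th2) (amp_down nbar th2) \<rho> i j"
    unfolding Kraus_def madd_def tri_kraus_def g e m by (simp add: add.assoc)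
qed

text \<open>The squared half-angle cosines u_n = cos^2(alpha_n/2) and U_n = cos^2(beta_n/2), in terms
  of which all transition probabilities are polynomial.\<close>
definition cos2_alpha :: "nat \<Rightarrow> nat \<Rightarrow> real" where
  "cos2_alpha nbar n = (cos (alpha_n nbar n / 2))\<^sup>2"

definition cos2_beta :: "real \<Rightarrow> nat \<Rightarrow> real" where
  "cos2_beta th2 n = (cos (beta_n th2 n / 2))\<^sup>2"

lemma cos_via_half: "cos x = 2 * (cos (x / 2))\<^sup>2 - 1" for x :: real
  using cos_double_cos[of "x / 2"] by simp

lemma sin_via_half: "sin x = 2 * sin (x / 2) * cos (x / 2)" for x :: real
  using sin_double[of "x / 2"] by simp

lemma amp_up_sq:
  "(amp_up nbar th2 n)\<^sup>2 = 4 * (cos2_beta th2 n)\<^sup>2 * cos2_alpha nbar n * (1 - cos2_alpha nbar n)"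
proof -
  have "amp_up nbar th2 n = 2 * (cos (beta_n th2 n / 2))\<^sup>2 * sin (alpha_n nbar n / 2) * cos (alpha_n nbar n / 2)"
    unfolding amp_up_def cos_via_half[of "beta_n th2 n"] sin_via_half[of "alpha_n nbar n"] by simp
  hence "(amp_up nbar th2 n)\<^sup>2
      = 4 * ((cos (beta_n th2 n / 2))\<^sup>2)\<^sup>2 * (cos (alpha_n nbar n / 2))\<^sup>2 * (sin (alpha_n nbar n / 2))\<^sup>2"
    by (simp add: power_mult_distrib power2_eq_square)
  thus ?thesis unfolding cos2_alpha_def cos2_beta_def by (simp add: sin_squared_eq)
qed

lemma amp_stay_eq: "amp_stay nbar th2 n = 2 * cos2_alpha nbar n * cos2_beta th2 n - 1"
  unfolding amp_stay_def cos2_alpha_def cos2_beta_def cos_via_half[of "beta_n th2 n"] sin_squared_eq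
  by (simp add: algebra_simps)

lemma amp_down_sq:
  "(amp_down nbar th2 n)\<^sup>2 = 4 * cos2_beta th2 n * (1 - cos2_beta th2 n) * cos2_alpha nbar n"
  unfolding amp_down_def cos2_alpha_def cos2_beta_def sin_via_half[of "beta_n th2 n"]
  by (simp add: power_mult_distrib sin_squared_eq)

lemma amp_probabilities:
  "(amp_up nbar th2 n)\<^sup>2 + (amp_stay nbar th2 n)\<^sup>2 + (amp_down nbar th2 n)\<^sup>2 = 1"
  unfolding amp_up_sq amp_stay_eq amp_down_sq by (simp add: power2_eq_square algebra_simps)

text \<open>At D = 4 nbar + 3 one has alpha_D = 2 pi, so |D> cannot be raised; |0> cannot be lowered.\<close>
lemma sqrt_top: "sqrt (real (4 * nbar + 3) + 1) = 2 * sqrt (real nbar + 1)"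
proof -
  have "real (4 * nbar + 3) + 1 = 2\<^sup>2 * (real nbar + 1)" by simp
  thus ?thesis by (simp only: real_sqrt_mult real_sqrt_abs)
qed

lemma alpha_n_top: "alpha_n nbar (4 * nbar + 3) = 2 * pi"
  unfolding alpha_n_eq theta1_def sqrt_top by simp

lemma amp_up_top: "amp_up nbar th2 (4 * nbar + 3) = 0"
  unfolding amp_up_def alpha_n_top by simp

lemma amp_down_0: "amp_down nbar th2 0 = 0"
  unfolding amp_down_def beta_n_def by simp

lemma tridiagonal_channel_Kraus:
  "tridiagonal_channel (amp_up nbar th2) (amp_stay nbar th2) (amp_down nbar th2) (4 * nbar + 3)"
  by unfold_locales (rule amp_probabilities amp_down_0 amp_up_top)+

lemma alpha_n_half: "alpha_n nbar n / 2 = pi / 2 * sqrt ((real n + 1) / (real nbar + 1))"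
  unfolding alpha_n_def by simp

lemma cos2_alpha_le_1: "cos2_alpha nbar n \<le> 1"
  unfolding cos2_alpha_def by (simp add: abs_square_le_1)

lemma cos2_alpha_target: "cos2_alpha nbar nbar = 0"
  unfolding cos2_alpha_def alpha_n_half by simp

lemma cos2_alpha_top: "cos2_alpha nbar (4 * nbar + 3) = 1"
  unfolding cos2_alpha_def alpha_n_top by simp

lemma cos2_alpha_less_1:
  assumes "n < nbar"
  shows "cos2_alpha nbar n < 1"
proof -
  define r where "r = sqrt ((real n + 1) / (real nbar + 1))"
  have "r < 1" "0 < r" unfolding r_def using assms by simp_all
  hence "0 < sin (pi / 2 * r)" by (intro sin_gt_zero) auto
  hence "0 < (sin (alpha_n nbar n / 2))\<^sup>2" unfolding alpha_n_half r_def[symmetric] by simp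
  thus ?thesis unfolding cos2_alpha_def sin_squared_eq by simp
qed

lemma cos2_alpha_pos:
  assumes "n \<le> 4 * nbar + 3" "n \<noteq> nbar"
  shows "0 < cos2_alpha nbar n"
proof -
  define r where "r = sqrt ((real n + 1) / (real nbar + 1))"
  have "cos (pi / 2 * r) \<noteq> 0"
  proof (cases "n < nbar")
    case True
    hence "r < 1" "0 < r" unfolding r_def by simp_all
    hence "0 < cos (pi / 2 * r)" by (intro cos_gt_zero) (auto simp: mult_less_cancel_left1)
    thus ?thesis by simp
  next
    case False
    hence "1 < r" unfolding r_def using assms(2) by simp
    moreover have "r \<le> 2"
    proof -
      have "(real n + 1) / (real nbar + 1) \<le> 4" using assms(1) by (simp add: divide_le_eq)
      hence "r \<le> sqrt 4" unfolding r_def by (rule real_sqrt_le_mono)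
      thus ?thesis by simp
    qed
    ultimately have "0 < cos (pi - pi / 2 * r)" by (intro cos_gt_zero_pi) (auto simp: algebra_simps)
    thus ?thesis by simp
  qed
  thus ?thesis unfolding cos2_alpha_def alpha_n_half r_def[symmetric] by simp
qed

lemma cos2_beta_le_1: "cos2_beta th2 n \<le> 1"
  unfolding cos2_beta_def by (simp add: abs_square_le_1)

lemma cos2_beta_0: "cos2_beta th2 0 = 1"
  unfolding cos2_beta_def beta_n_def by simp

lemma sin_beta_nonzero:
  assumes "0 < th2" and "\<forall>n\<in>{1..D}. \<forall>k::nat. th2 \<noteq> real k * pi / sqrt (real n)"
    and "1 \<le> n" "n \<le> D"
  shows "sin (beta_n th2 n) \<noteq> 0"
proof
  assume "sin (beta_n th2 n) = 0"
  then obtain i :: int where i: "beta_n th2 n = of_int i * pi" using sin_zero_iff_int2 by blast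
  have sq: "0 < sqrt (real n)" using assms(3) by simp
  hence "0 < beta_n th2 n" using assms(1) unfolding beta_n_def by simp
  hence "0 < of_int i * pi" using i by simp
  hence "0 < i" by (simp add: zero_less_mult_iff)
  moreover have "th2 * sqrt (real n) = of_int (2 * i) * pi" using i unfolding beta_n_def by simp
  ultimately have "th2 = real (nat (2 * i)) * pi / sqrt (real n)" using sq by (simp add: field_simps)
  thus False using assms(2-4) by auto
qed

lemma cos2_beta_bounds:
  assumes "0 < th2" and "\<forall>n\<in>{1..D}. \<forall>k::nat. th2 \<noteq> real k * pi / sqrt (real n)"
    and "n \<le> D"
  shows "0 < cos2_beta th2 n" and "1 \<le> n \<Longrightarrow> cos2_beta th2 n < 1"
proof -
  have half: "1 \<le> n \<Longrightarrow> sin (beta_n th2 n / 2) \<noteq> 0 \<and> cos (beta_n th2 n / 2) \<noteq> 0"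
    using sin_beta_nonzero[OF assms(1,2) _ assms(3)] sin_via_half[of "beta_n th2 n"] by auto
  show "0 < cos2_beta th2 n"
    using half cos2_beta_0 by (cases "n = 0") (auto simp: cos2_beta_def)
  show "cos2_beta th2 n < 1" if "1 \<le> n"
  proof -
    have "0 < (sin (beta_n th2 n / 2))\<^sup>2" using half[OF that] by simp
    thus ?thesis unfolding cos2_beta_def sin_squared_eq by simp
  qed
qed

lemma dual_Kraus_minus:
  "dual (amp_up nbar th2) (amp_stay nbar th2) (amp_down nbar th2) w n - w n
     = 4 * (cos2_beta th2 n)\<^sup>2 * cos2_alpha nbar n * (1 - cos2_alpha nbar n) * (w (Suc n) - w n)
     + 4 * cos2_beta th2 n * (1 - cos2_beta th2 n) * cos2_alpha nbar n * (w (n - 1) - w n)"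
  using tridiagonal_channel.dual_minus[OF tridiagonal_channel_Kraus]
  unfolding amp_up_sq amp_down_sq .

lemma less_from_factored_difference:
  "x - y = P * (q - 1) \<Longrightarrow> 0 < P \<Longrightarrow> q < 1 \<Longrightarrow> x < (y::real)"
  using mult_pos_neg[of P "q - 1"] by simp

lemma mult_less_1: "x \<le> 1 \<Longrightarrow> 0 \<le> \<eta> \<Longrightarrow> \<eta> < 1 \<Longrightarrow> x * \<eta> < (1::real)"
  using mult_right_mono[of x 1 \<eta>] by simp

context
  fixes nbar :: nat and th2 \<eta> :: real and f :: "nat \<Rightarrow> real"
  assumes nbar_pos: "1 \<le> nbar"
    and th2_pos: "0 < th2"
    and nonresonant: "\<forall>n\<in>{1..4 * nbar + 3}. \<forall>k::nat. th2 \<noteq> real k * pi / sqrt (real n)"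
    and eta_pos: "0 < \<eta>" and eta_less_1: "\<eta> < 1"
    and f_spec: "is_f nbar th2 \<eta> f"
begin

abbreviation (input) u :: "nat \<Rightarrow> real" where "u \<equiv> cos2_alpha nbar"
abbreviation (input) U :: "nat \<Rightarrow> real" where "U \<equiv> cos2_beta th2"

lemma f_initial: "f nbar = 0" "f (Suc nbar) = 1" "f (nbar - 1) = 1"
  using f_spec unfolding is_f_def by auto

lemma f_step_up:
  "nbar < n \<Longrightarrow> n < 4 * nbar + 3 \<Longrightarrow> f (Suc n) = f n + \<eta> * (1 - U n) * (f n - f (n - 1))"
  using f_spec unfolding is_f_def cos2_beta_def sin_squared_eq by auto

lemma f_step_down:
  "0 < n \<Longrightarrow> n < nbar \<Longrightarrow> f (n - 1) = f n + \<eta> * (1 - u n) * U n * (f n - f (Suc n))"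
  using f_spec unfolding is_f_def cos2_alpha_def cos2_beta_def sin_squared_eq by auto

lemmas U_pos = cos2_beta_bounds(1)[OF th2_pos nonresonant]
lemmas U_less_1 = cos2_beta_bounds(2)[OF th2_pos nonresonant]

lemma f_increasing:
  assumes "nbar < n" "n \<le> 4 * nbar + 3"
  shows "f (n - 1) < f n \<and> 1 \<le> f n"
proof -
  have "Suc nbar \<le> n" using assms(1) by simp
  thus ?thesis using assms(2)
  proof (induction n rule: dec_induct)
    case base thus ?case using f_initial by simp
  next
    case (step n)
    have IH: "f (n - 1) < f n" "1 \<le> f n" using step by auto
    have "0 < \<eta> * (1 - U n) * (f n - f (n - 1))"
      using eta_pos U_less_1[of n] IH step by simp
    thus ?case using f_step_up[of n] IH step by simp
  qed
qed

lemma f_decreasing: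
  assumes "n < nbar"
  shows "f (Suc n) < f n \<and> 1 \<le> f n"
proof -
  have "n \<le> nbar - 1" using assms by simp
  thus ?thesis
  proof (induction n rule: inc_induct)
    case base thus ?case using f_initial nbar_pos by simp
  next
    case (step n)
    have IH: "f (Suc (Suc n)) < f (Suc n)" "1 \<le> f (Suc n)" using step by auto
    have "0 < \<eta> * (1 - u (Suc n)) * U (Suc n) * (f (Suc n) - f (Suc (Suc n)))"
      using eta_pos cos2_alpha_less_1[of "Suc n"] U_pos[of "Suc n"] IH step by simp
    thus ?case using f_step_down[of "Suc n"] IH step by simp
  qed
qed

lemma f_at_least_1: "n \<le> 4 * nbar + 3 \<Longrightarrow> n \<noteq> nbar \<Longrightarrow> 1 \<le> f n"
  using f_increasing f_decreasing by (cases "n < nbar") auto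

abbreviation (input) Tf :: "nat \<Rightarrow> real" where
  "Tf \<equiv> dual (amp_up nbar th2) (amp_stay nbar th2) (amp_down nbar th2) f"

text \<open>f is not increased at the target, and strictly decreased in expectation elsewhere: below
  the target because of the factor eta < 1 in the downward recursion, above it likewise.\<close>
lemma dual_f_target: "Tf nbar \<le> 0"
  using dual_Kraus_minus[of nbar th2 f nbar] f_initial(1) cos2_alpha_target by simp

lemma dual_f_less_below:
  assumes "n < nbar"
  shows "Tf n < f n"
proof -
  define d where "d = f n - f (Suc n)"
  have d: "0 < d" unfolding d_def using f_decreasing[OF assms] by simp
  have down: "4 * U n * (1 - U n) * u n * (f (n - 1) - f n)
      = 4 * U n * (1 - U n) * u n * (\<eta> * (1 - u n) * U n * d)"
  proof (cases "n = 0")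
    case True thus ?thesis using cos2_beta_0 by simp
  next
    case False thus ?thesis using f_step_down[of n] assms unfolding d_def by simp
  qed
  have up: "f (Suc n) - f n = - d" unfolding d_def by simp
  have "Tf n - f n = 4 * (U n)\<^sup>2 * u n * (1 - u n) * (- d)
      + 4 * U n * (1 - U n) * u n * (\<eta> * (1 - u n) * U n * d)"
    unfolding dual_Kraus_minus down up ..
  hence "Tf n - f n = 4 * (U n)\<^sup>2 * u n * (1 - u n) * d * ((1 - U n) * \<eta> - 1)"
    by (simp add: algebra_simps power2_eq_square)
  moreover have "0 < 4 * (U n)\<^sup>2 * u n * (1 - u n) * d"
    using U_pos[of n] cos2_alpha_pos[of n nbar] cos2_alpha_less_1[OF assms] d assms by simp
  moreover have "(1 - U n) * \<eta> < 1"
    using U_pos[of n] eta_pos eta_less_1 assms by (intro mult_less_1) auto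
  ultimately show ?thesis by (rule less_from_factored_difference)
qed

lemma dual_f_less_above:
  assumes "nbar < n" "n \<le> 4 * nbar + 3"
  shows "Tf n < f n"
proof -
  define d where "d = f n - f (n - 1)"
  have d: "0 < d" unfolding d_def using f_increasing[OF assms] by simp
  have pos: "0 < 4 * U n * (1 - U n) * u n * d"
    using U_pos[of n] U_less_1[of n] cos2_alpha_pos[of n nbar] d assms by simp
  show ?thesis
  proof (cases "n = 4 * nbar + 3")
    case True
    hence "Tf n - f n = - (4 * U n * (1 - U n) * u n * d)"
      unfolding dual_Kraus_minus d_def using cos2_alpha_top by (simp add: algebra_simps)
    thus ?thesis using pos by linarith
  next
    case False
    hence up: "f (Suc n) - f n = \<eta> * (1 - U n) * d" using f_step_up[of n] assms unfolding d_def by simp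
    have down: "f (n - 1) - f n = - d" unfolding d_def by simp
    have "Tf n - f n = 4 * (U n)\<^sup>2 * u n * (1 - u n) * (\<eta> * (1 - U n) * d)
        + 4 * U n * (1 - U n) * u n * (- d)"
      unfolding dual_Kraus_minus up down ..
    hence "Tf n - f n = 4 * U n * (1 - U n) * u n * d * (U n * (1 - u n) * \<eta> - 1)"
      by (simp add: algebra_simps power2_eq_square)
    moreover have "U n * (1 - u n) * \<eta> < 1"
    proof -
      have "U n * (1 - u n) \<le> 1"
        using cos2_beta_le_1[of th2 n] U_pos[of n] cos2_alpha_pos[of n nbar] cos2_alpha_le_1[of nbar n] assms
        by (intro mult_le_one) auto
      thus ?thesis using eta_pos eta_less_1 by (intro mult_less_1) auto
    qed
    ultimately show ?thesis using less_from_factored_difference pos by blast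
  qed
qed

lemma lyapunov_channel_Kraus:
  "lyapunov_channel (amp_up nbar th2) (amp_stay nbar th2) (amp_down nbar th2) (4 * nbar + 3) nbar f"
proof (intro lyapunov_channel.intro tridiagonal_channel_Kraus lyapunov_channel_axioms.intro)
  show "nbar \<le> 4 * nbar + 3" by simp
  show "f nbar = 0" by (rule f_initial(1))
  show "1 \<le> f n" if "n \<le> 4 * nbar + 3" "n \<noteq> nbar" for n using f_at_least_1 that .
  show "Tf nbar \<le> 0" by (rule dual_f_target)
  show "Tf n < f n" if "n \<le> 4 * nbar + 3" "n \<noteq> nbar" for n
    using dual_f_less_below dual_f_less_above that by (cases "n < nbar") auto
qed

end

lemma Mg_invariant: "invariant_on (4 * nbar + 3) (Mg nbar th2)"
  unfolding invariant_on_def Mg_entry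
proof (intro allI impI)
  fix i j assume ij: "j \<le> 4 * nbar + 3 \<and> 4 * nbar + 3 < i"
  show "(if i = Suc j then complex_of_real (amp_up nbar th2 j) else 0) = 0"
  proof (cases "i = Suc j")
    case True
    hence "j = 4 * nbar + 3" using ij by simp
    thus ?thesis using amp_up_top by simp
  qed simp
qed

lemma Me_invariant: "invariant_on D (Me nbar th2)"
  unfolding invariant_on_def Me_eq fN_def by auto

lemma Mm_invariant: "invariant_on D (Mm nbar th2 \<phi>)"
  unfolding invariant_on_def Mm_entry by auto

theorem theorem1:
  fixes nbar :: nat and th2 \<phi> \<eta> :: real and f :: "nat \<Rightarrow> real"
  assumes "1 \<le> nbar"
    and "0 < th2"
    and "\<forall>n\<in>{1..4 * nbar + 3}. \<forall>k::nat. th2 \<noteq> real k * pi / sqrt (real n)"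
    and "0 < \<eta>" and "\<eta> < 1"
    and "is_f nbar th2 \<eta> f"
  shows "invariant_on (4 * nbar + 3) (Mg nbar th2)
       \<and> invariant_on (4 * nbar + 3) (Me nbar th2)
       \<and> invariant_on (4 * nbar + 3) (Mm nbar th2 \<phi>)
       \<and> (\<forall>\<rho>0. density_on (4 * nbar + 3) \<rho>0 \<longrightarrow>
            (\<forall>i j. (\<lambda>k. ((Kraus nbar th2 \<phi> ^^ k) \<rho>0) i j) \<longlonglongrightarrow> ketbra nbar i j))
       \<and> (\<forall>\<rho>. density_on (4 * nbar + 3) \<rho> \<and> \<rho> \<noteq> ketbra nbar \<longrightarrow>
            Lyap f (Kraus nbar th2 \<phi> \<rho>) < Lyap f \<rho>)"
proof -
  interpret lyapunov_channel "amp_up nbar th2" "amp_stay nbar th2" "amp_down nbar th2"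
      "4 * nbar + 3" nbar f
    by (rule lyapunov_channel_Kraus[OF assms])
  show ?thesis
    unfolding Kraus_eq
  proof (intro conjI allI impI Mg_invariant Me_invariant Mm_invariant)
    fix \<rho>0 i j assume "density_on (4 * nbar + 3) \<rho>0"
    thus "(\<lambda>k. (K ^^ k) \<rho>0 i j) \<longlonglongrightarrow> ketbra nbar i j"
      by (intro convergence_to_target density_weak_density)
  next
    fix \<rho> assume "density_on (4 * nbar + 3) \<rho> \<and> \<rho> \<noteq> ketbra nbar"
    thus "Lyap f (K \<rho>) < Lyap f \<rho>"
      by (intro Lyap_strict_decrease density_weak_density) simp_all
  qed
qed

end
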